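(* Let $\lambda$ be a well-behaved hypergraph width measure. For every hypergraph $H$ and every set $S\subseteq V(H)$, $\alpha_{\underline{H}}(S)\le\lambda_H(S)$.
   Context: A hypergraph $H$ has finite vertex set $V(H)$ and edge set $E(H)$ of subsets of $V(H)$; $||H||$ is the size of its encoding. The Gaifman graph $\underline{H}$ is the graph on $V(H)$ with two distinct vertices adjacent iff they lie in a common edge of $H$. For a graph $G$ and $S\subseteq V(G)$, $\alpha_G(S)$ is the maximum size of an independent set of $G$ contained in $S$. A width measure $\lambda$ assigns to each hypergraph $H$ a real function $\lambda_H$ on subsets of $V(H)$. $\lambda$ is well-behaved if: (1) $\lambda_H(\{x\})\ge1$; (2) $\lambda_H(S\cup T)\le\lambda_H(S)+\lambda_H(T)$; (3) equality in (2) for disjoint $S,T$ with no edge of $\underline{H}$ between them; (4) $\lambda_F(S)\le\lambda_H(T)$ whenever $V(H)\subseteq V(F)$, $E(H)\subseteq E(F)$ and $S\subseteq T$; (5) $\lambda_H(S)\le k$ is decidable in time $||H||^{O(k)}$. *)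

theory Defs
  imports Main "HOL.Real"
begin

definition hypergraph :: "'a set \<Rightarrow> 'a set set \<Rightarrow> bool" where
  "hypergraph V E \<longleftrightarrow> finite V \<and> (\<forall>e\<in>E. e \<subseteq> V)"

definition gaifman_adj :: "'a set set \<Rightarrow> 'a \<Rightarrow> 'a \<Rightarrow> bool" where
  "gaifman_adj E x y \<longleftrightarrow> x \<noteq> y \<and> (\<exists>e\<in>E. x \<in> e \<and> y \<in> e)"

definition independent_in :: "('a \<Rightarrow> 'a \<Rightarrow> bool) \<Rightarrow> 'a set \<Rightarrow> bool" where
  "independent_in adj I \<longleftrightarrow> (\<forall>x\<in>I. \<forall>y\<in>I. \<not> adj x y)"

text \<open>alpha_G(S): maximum size of an independent set of G contained in S
  (S finite in all uses).\<close>
definition alpha :: "('a \<Rightarrow> 'a \<Rightarrow> bool) \<Rightarrow> 'a set \<Rightarrow> nat" where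
  "alpha adj S = Max {card I | I. I \<subseteq> S \<and> independent_in adj I}"

text \<open>A width measure: lam V E S is lambda_H(S) for H = (V,E). Conditions (1)-(4)
  of well-behavedness; (5) (running time) is not formalized.\<close>
definition well_behaved :: "('a set \<Rightarrow> 'a set set \<Rightarrow> 'a set \<Rightarrow> real) \<Rightarrow> bool" where
  "well_behaved lam \<longleftrightarrow>
    (\<forall>V E x. hypergraph V E \<and> x \<in> V \<longrightarrow> lam V E {x} \<ge> 1) \<and>
    (\<forall>V E S T. hypergraph V E \<and> S \<subseteq> V \<and> T \<subseteq> V \<longrightarrow>
        lam V E (S \<union> T) \<le> lam V E S + lam V E T) \<and>
    (\<forall>V E S T. hypergraph V E \<and> S \<subseteq> V \<and> T \<subseteq> V \<and> S \<inter> T = {} \<and>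
        (\<forall>x\<in>S. \<forall>y\<in>T. \<not> gaifman_adj E x y) \<longrightarrow>
        lam V E (S \<union> T) = lam V E S + lam V E T) \<and>
    (\<forall>V E V' E' S T. hypergraph V E \<and> hypergraph V' E' \<and> V \<subseteq> V' \<and> E \<subseteq> E' \<and>
        S \<subseteq> T \<and> T \<subseteq> V \<longrightarrow> lam V' E' S \<le> lam V E T)"

end

theory Submission
  imports Defs
begin

text \<open>An independent set I of the Gaifman graph splits as a singleton and the rest with no
  Gaifman edge in between, so additivity on such splits together with lam {x} \<ge> 1 gives
  lam I \<ge> |I| by induction on I; monotonicity then lifts this from a maximum independent
  subset of S to S itself.\<close>

lemma hypergraph_finite_subset: "hypergraph V E \<Longrightarrow> S \<subseteq> V \<Longrightarrow> finite S"
  unfolding hypergraph_def using finite_subset by blast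

lemma well_behaved_singleton_ge_one:
  assumes "well_behaved lam" "hypergraph V E" "x \<in> V"
  shows "lam V E {x} \<ge> 1"
proof -
  have "\<forall>V E x. hypergraph V E \<and> x \<in> V \<longrightarrow> lam V E {x} \<ge> 1"
    using assms(1) unfolding well_behaved_def by (elim conjE)
  then show ?thesis
    using assms(2,3) by blast
qed

lemma well_behaved_union_nonadjacent:
  assumes "well_behaved lam" "hypergraph V E" "S \<subseteq> V" "T \<subseteq> V" "S \<inter> T = {}"
    and "\<forall>x\<in>S. \<forall>y\<in>T. \<not> gaifman_adj E x y"
  shows "lam V E (S \<union> T) = lam V E S + lam V E T"
proof -
  have "\<forall>V E S T. hypergraph V E \<and> S \<subseteq> V \<and> T \<subseteq> V \<and> S \<inter> T = {} \<and>
      (\<forall>x\<in>S. \<forall>y\<in>T. \<not> gaifman_adj E x y) \<longrightarrow>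
      lam V E (S \<union> T) = lam V E S + lam V E T"
    using assms(1) unfolding well_behaved_def by (elim conjE)
  then show ?thesis
    using assms(2-) by blast
qed

lemma well_behaved_mono:
  assumes "well_behaved lam" "hypergraph V E" "S \<subseteq> T" "T \<subseteq> V"
  shows "lam V E S \<le> lam V E T"
proof -
  have "\<forall>V E V' E' S T. hypergraph V E \<and> hypergraph V' E' \<and> V \<subseteq> V' \<and> E \<subseteq> E' \<and>
      S \<subseteq> T \<and> T \<subseteq> V \<longrightarrow> lam V' E' S \<le> lam V E T"
    using assms(1) unfolding well_behaved_def by (elim conjE)
  then show ?thesis
    using assms(2-) by blast
qed

lemma well_behaved_empty:
  assumes "well_behaved lam" "hypergraph V E"
  shows "lam V E {} = 0"
  using well_behaved_union_nonadjacent[OF assms, of "{}" "{}"] by simp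

lemma independent_in_subset:
  "independent_in adj I \<Longrightarrow> J \<subseteq> I \<Longrightarrow> independent_in adj J"
  unfolding independent_in_def by blast

lemma alpha_attained:
  assumes "finite S"
  obtains I where "I \<subseteq> S" "independent_in adj I" "alpha adj S = card I"
proof -
  let ?M = "{card I | I. I \<subseteq> S \<and> independent_in adj I}"
  have "finite ?M"
    using assms by simp
  moreover have "card {} \<in> ?M"
    unfolding independent_in_def by (intro CollectI exI[of _ "{}"]) simp
  ultimately have "Max ?M \<in> ?M"
    by (intro Max_in) auto
  then show thesis
    using that unfolding alpha_def by auto
qed

lemma well_behaved_card_le_independent:
  assumes wb: "well_behaved lam" and H: "hypergraph V E"
    and "I \<subseteq> V" "independent_in (gaifman_adj E) I"
  shows "real (card I) \<le> lam V E I"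
proof -
  have "finite I"
    using H \<open>I \<subseteq> V\<close> by (rule hypergraph_finite_subset)
  then show ?thesis
    using assms(3,4)
  proof (induction I rule: finite_induct)
    case empty
    show ?case
      using well_behaved_empty[OF wb H] by simp
  next
    case (insert x F)
    have "real (card F) \<le> lam V E F"
      using insert independent_in_subset[of _ "insert x F" F] by blast
    moreover have "lam V E {x} \<ge> 1"
      using well_behaved_singleton_ge_one[OF wb H] insert.prems(1) by simp
    moreover have "lam V E ({x} \<union> F) = lam V E {x} + lam V E F"
      using insert.prems insert.hyps(2)
      by (intro well_behaved_union_nonadjacent[OF wb H]) (auto simp: independent_in_def)
    ultimately show ?case
      using insert.hyps by simp
  qed
qed

theorem mainTheorem16:
  fixes lam :: "'a set \<Rightarrow> 'a set set \<Rightarrow> 'a set \<Rightarrow> real"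
    and V :: "'a set" and E :: "'a set set" and S :: "'a set"
  assumes "well_behaved lam"
    and "hypergraph V E"
    and "S \<subseteq> V"
  shows "real (alpha (gaifman_adj E) S) \<le> lam V E S"
proof -
  have "finite S"
    using assms(2,3) by (rule hypergraph_finite_subset)
  then obtain I where I: "I \<subseteq> S" "independent_in (gaifman_adj E) I"
      and alpha_eq: "alpha (gaifman_adj E) S = card I"
    by (rule alpha_attained)
  have "real (card I) \<le> lam V E I"
    using I assms by (intro well_behaved_card_le_independent) auto
  also have "\<dots> \<le> lam V E S"
    using I(1) assms by (intro well_behaved_mono)
  finally show ?thesis
    using alpha_eq by simp
qed

end
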